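(* Let $m\ge 2$. Consider the operators $\underline{D}$ and $-\frac{1}{r}\,\partial_{\underline{\omega}}+(m-1)\frac{1}{r}\,\underline{\omega}$ acting (by left action) on smooth $\mathbb{R}_{0,m}$-valued functions on $\mathbb{R}^m\setminus\{0\}$. Both operators are cartesian operators, i.e. each of them can be expressed using only the cartesian partial derivatives $\partial_{x_1},\dots,\partial_{x_m}$ together with (left) multiplication and division by analytic (polynomial) functions of $\underline{x}$.
   Context: $\mathbb{R}_{0,m}$ is the real Clifford algebra generated by an orthonormal basis $e_1,\dots,e_m$ of $\mathbb{R}^m$ with $e_j^2=-1$ and $e_ie_j=-e_je_i$ for $i\ne j$. A point of $\mathbb{R}^m$ is identified with the 1-vector $\underline{x}=\sum_j e_jx_j$, so $\underline{x}^2=-|\underline{x}|^2$; $r=|\underline{x}|$ and $\underline{\omega}=\underline{x}/r\in S^{m-1}$. Division by $\underline{x}$ means left multiplication by $\frac{1}{\underline{x}}=-\underline{x}/|\underline{x}|^2$. The Dirac operator is $\underline{\partial}=\sum_j e_j\partial_{x_j}$; in spherical coordinates $\underline{\partial}=\underline{\omega}\,\partial_r+\frac{1}{r}\partial_{\underline{\omega}}$, which defines the angular Dirac operator $\partial_{\underline{\omega}}:=r(\underline{\partial}-\underline{\omega}\,\partial_r)$. The signum-Dirac operator is $\underline{D}f:=\underline{\omega}\,\underline{\partial}(-\underline{\omega}\,f)$. The Euler operator is $\mathbb{E}=\sum_j x_j\partial_{x_j}$ and the angular momentum operator is $\Gamma=-\sum_{j<k}e_je_k(x_j\partial_{x_k}-x_k\partial_{x_j})$.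 An operator is called cartesian if it involves only partial derivatives with respect to the cartesian coordinates and multiplication and division by analytic functions. *)

theory Defs
  imports "HOL-Analysis.Analysis"
begin

text \<open>The dimension m is CARD('m) for a finite linearly ordered index type 'm
  (the order fixes the ordering of the basis e_1,...,e_m). A multivector is
  given by its coefficients on the basis blades e_A, A a subset of the index set.\<close>

type_synonym 'm clv = "'m set \<Rightarrow> real"
type_synonym 'm clf = "(real, 'm) vec \<Rightarrow> 'm clv"

definition cl_zero :: "'m clv" where "cl_zero = (\<lambda>A. 0)"
definition cl_scalar :: "real \<Rightarrow> 'm clv" where "cl_scalar c = (\<lambda>A. if A = {} then c else 0)"
definition cl_one :: "'m clv" where "cl_one = cl_scalar 1"
definition cl_add :: "'m clv \<Rightarrow> 'm clv \<Rightarrow> 'm clv" where "cl_add u v = (\<lambda>A. u A + v A)"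
definition cl_scale :: "real \<Rightarrow> 'm clv \<Rightarrow> 'm clv" where "cl_scale c u = (\<lambda>A. c * u A)"
definition cl_neg :: "'m clv \<Rightarrow> 'm clv" where "cl_neg u = cl_scale (-1) u"
definition cl_sub :: "'m clv \<Rightarrow> 'm clv \<Rightarrow> 'm clv" where "cl_sub u v = cl_add u (cl_neg v)"

text \<open>Sign of the blade product e_A e_B = cl_sign A B e_(A symdiff B), with e_j^2 = -1.\<close>
definition cl_sign :: "'m::{finite,linorder} set \<Rightarrow> 'm set \<Rightarrow> real" where
  "cl_sign A B = (-1) ^ (card {(a, b). a \<in> A \<and> b \<in> B \<and> b < a} + card (A \<inter> B))"

definition cl_mul :: "'m::{finite,linorder} clv \<Rightarrow> 'm clv \<Rightarrow> 'm clv" where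
  "cl_mul u v = (\<lambda>C. \<Sum>A\<in>UNIV. \<Sum>B\<in>UNIV.
       if (A - B) \<union> (B - A) = C then cl_sign A B * u A * v B else 0)"

definition cl_basis :: "'m \<Rightarrow> 'm clv" where "cl_basis j = (\<lambda>A. if A = {j} then 1 else 0)"

text \<open>Identification of a point x of R^m with the 1-vector sum_j e_j x_j.\<close>
definition cl_vec :: "(real, 'm::finite) vec \<Rightarrow> 'm clv" where
  "cl_vec x = (\<lambda>A. \<Sum>j\<in>UNIV. if A = {j} then x $ j else 0)"

definition cl_invertible :: "'m::{finite,linorder} clv \<Rightarrow> bool" where
  "cl_invertible u \<longleftrightarrow> (\<exists>v. cl_mul v u = cl_one \<and> cl_mul u v = cl_one)"

definition cl_inverse :: "'m::{finite,linorder} clv \<Rightarrow> 'm clv" where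
  "cl_inverse u = (SOME v. cl_mul v u = cl_one \<and> cl_mul u v = cl_one)"

definition pd :: "'m::finite \<Rightarrow> ((real, 'm) vec \<Rightarrow> real) \<Rightarrow> (real, 'm) vec \<Rightarrow> real" where
  "pd j g x = deriv (\<lambda>t. g (x + t *\<^sub>R axis j 1)) 0"

fun iter_pd :: "'m::finite list \<Rightarrow> ((real, 'm) vec \<Rightarrow> real) \<Rightarrow> (real, 'm) vec \<Rightarrow> real" where
  "iter_pd [] g = g"
| "iter_pd (j # js) g = pd j (iter_pd js g)"

definition smooth_real :: "((real, 'm::finite) vec \<Rightarrow> real) \<Rightarrow> bool" where
  "smooth_real g \<longleftrightarrow> (\<forall>js. continuous_on (- {0}) (iter_pd js g) \<and>
     (\<forall>j. \<forall>x. x \<noteq> 0 \<longrightarrow> (\<lambda>t. iter_pd js g (x + t *\<^sub>R axis j 1)) differentiable (at 0)))"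

definition cl_smooth :: "'m::finite clf \<Rightarrow> bool" where
  "cl_smooth f \<longleftrightarrow> (\<forall>A. smooth_real (\<lambda>x. f x A))"

definition pdc :: "'m::finite \<Rightarrow> 'm clf \<Rightarrow> 'm clf" where
  "pdc j f x = (\<lambda>A. pd j (\<lambda>y. f y A) x)"

definition dirac :: "'m::{finite,linorder} clf \<Rightarrow> 'm clf" where
  "dirac f x = (\<lambda>A. \<Sum>j\<in>UNIV. cl_mul (cl_basis j) (pdc j f x) A)"

definition omega :: "(real, 'm::finite) vec \<Rightarrow> 'm clv" where
  "omega x = cl_vec (x /\<^sub>R norm x)"

text \<open>Radial derivative (spherical coordinates x = r omega).\<close>
definition radial_deriv :: "'m::finite clf \<Rightarrow> 'm clf" where
  "radial_deriv f x = (\<lambda>A. deriv (\<lambda>t. f (t *\<^sub>R (x /\<^sub>R norm x)) A) (norm x))"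

definition angular_dirac :: "'m::{finite,linorder} clf \<Rightarrow> 'm clf" where
  "angular_dirac f x = cl_scale (norm x)
     (cl_sub (dirac f x) (cl_mul (omega x) (radial_deriv f x)))"

definition signum_dirac :: "'m::{finite,linorder} clf \<Rightarrow> 'm clf" where
  "signum_dirac f x = cl_mul (omega x) (dirac (\<lambda>y. cl_neg (cl_mul (omega y) (f y))) x)"

definition second_op :: "'m::{finite,linorder} clf \<Rightarrow> 'm clf" where
  "second_op f x = cl_add (cl_scale (- 1 / norm x) (angular_dirac f x))
     (cl_scale ((real CARD('m) - 1) / norm x) (cl_mul (omega x) (f x)))"

inductive polyfun :: "((real, 'm::finite) vec \<Rightarrow> real) \<Rightarrow> bool" where
  pf_const: "polyfun (\<lambda>x. c)"
| pf_coord: "polyfun (\<lambda>x. x $ j)"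
| pf_add: "polyfun p \<Longrightarrow> polyfun q \<Longrightarrow> polyfun (\<lambda>x. p x + q x)"
| pf_mult: "polyfun p \<Longrightarrow> polyfun q \<Longrightarrow> polyfun (\<lambda>x. p x * q x)"

definition cl_polyfun :: "'m::finite clf \<Rightarrow> bool" where
  "cl_polyfun a \<longleftrightarrow> (\<forall>A. polyfun (\<lambda>x. a x A))"

inductive_set cart_ops :: "('m::{finite,linorder} clf \<Rightarrow> 'm clf) set" where
  co_id: "(\<lambda>f. f) \<in> cart_ops"
| co_pd: "(\<lambda>f. pdc j f) \<in> cart_ops"
| co_mult: "cl_polyfun a \<Longrightarrow> (\<lambda>f x. cl_mul (a x) (f x)) \<in> cart_ops"
| co_div: "cl_polyfun a \<Longrightarrow> (\<forall>x. x \<noteq> 0 \<longrightarrow> cl_invertible (a x)) \<Longrightarrow>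
     (\<lambda>f x. cl_mul (cl_inverse (a x)) (f x)) \<in> cart_ops"
| co_comp: "L1 \<in> cart_ops \<Longrightarrow> L2 \<in> cart_ops \<Longrightarrow> (\<lambda>f. L1 (L2 f)) \<in> cart_ops"
| co_add: "L1 \<in> cart_ops \<Longrightarrow> L2 \<in> cart_ops \<Longrightarrow> (\<lambda>f x. cl_add (L1 f x) (L2 f x)) \<in> cart_ops"

definition cartesian_op :: "('m::{finite,linorder} clf \<Rightarrow> 'm clf) \<Rightarrow> bool" where
  "cartesian_op P \<longleftrightarrow> (\<exists>L \<in> cart_ops. \<forall>f. cl_smooth f \<longrightarrow> (\<forall>x. x \<noteq> 0 \<longrightarrow> P f x = L f x))"

end

theory Submission
  imports Defs
begin

(* Both operators are brought into cartesian form with the product rule alone; only the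
   bilinearity of the Clifford product is used, no relation such as e_j^2 = -1.
   From d_j omega = e_j / r - x_j x / r^3 one gets
     D f = sum_j ( -(1/r^2) x e_j e_j f + (x_j/r^4) x e_j x f - (1/r^2) x e_j x d_j f ),
   and from omega d_r = (1/r^2) x E on smooth functions
     -(1/r) d_omega + (m-1)(1/r) omega = -Dirac + (1/r^2) x E + (m-1)(1/r^2) x.
   All coefficients are polynomials divided by powers of r^2 = |x|^2, a polynomial without
   zeros on R^m minus the origin. The identity for d_r is the chain rule along rays, which
   needs Frechet differentiability; this follows from the continuity of the partial
   derivatives. *)

definition cl_sum :: "'i set \<Rightarrow> ('i \<Rightarrow> 'm clv) \<Rightarrow> 'm clv" where
  "cl_sum S F = (\<lambda>A. \<Sum>j\<in>S. F j A)"

definition cl_mul_coeff :: "'m::{finite,linorder} set \<Rightarrow> 'm set \<Rightarrow> 'm set \<Rightarrow> real" where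
  "cl_mul_coeff A B C = (if (A - B) \<union> (B - A) = C then cl_sign A B else 0)"

lemma cl_mul_eq_sum_coeff: "cl_mul u v C = (\<Sum>A\<in>UNIV. \<Sum>B\<in>UNIV. cl_mul_coeff A B C * u A * v B)"
  unfolding cl_mul_def cl_mul_coeff_def by (intro sum.cong refl) auto

lemma cl_mul_add_left: "cl_mul (cl_add u v) w = cl_add (cl_mul u w) (cl_mul v w)"
  by (simp add: fun_eq_iff cl_mul_eq_sum_coeff cl_add_def algebra_simps sum.distrib)

lemma cl_mul_add_right: "cl_mul u (cl_add v w) = cl_add (cl_mul u v) (cl_mul u w)"
  by (simp add: fun_eq_iff cl_mul_eq_sum_coeff cl_add_def algebra_simps sum.distrib)

lemma cl_mul_scale_left: "cl_mul (cl_scale c u) v = cl_scale c (cl_mul u v)"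
  by (simp add: fun_eq_iff cl_mul_eq_sum_coeff cl_scale_def algebra_simps sum_distrib_left)

lemma cl_mul_scale_right: "cl_mul u (cl_scale c v) = cl_scale c (cl_mul u v)"
  by (simp add: fun_eq_iff cl_mul_eq_sum_coeff cl_scale_def algebra_simps sum_distrib_left)

lemma cl_mul_sum_right: "cl_mul u (cl_sum S F) = cl_sum S (\<lambda>j. cl_mul u (F j))"
  by (simp add: fun_eq_iff cl_mul_eq_sum_coeff cl_sum_def sum_distrib_left sum_distrib_right
      sum.swap[where A = S] mult.assoc)

lemma cl_scale_scale: "cl_scale a (cl_scale b u) = cl_scale (a * b) u"
  by (simp add: cl_scale_def fun_eq_iff)

lemmas cl_bilinear_simps = cl_mul_add_left cl_mul_add_right cl_mul_scale_left cl_mul_scale_right cl_scale_scale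

lemma cl_mul_scalar_left:
  fixes u :: "'m::{finite,linorder} clv"
  shows "cl_mul (cl_scalar c) u = cl_scale c u"
proof
  fix C
  have "cl_mul (cl_scalar c) u C
      = (\<Sum>A\<in>UNIV. if A = ({} :: 'm set) then \<Sum>B\<in>UNIV. cl_mul_coeff {} B C * c * u B else 0)"
    unfolding cl_mul_eq_sum_coeff by (rule sum.cong[OF refl]) (auto simp: cl_scalar_def)
  also have "\<dots> = cl_scale c u C"
    by (simp add: cl_mul_coeff_def cl_sign_def cl_scale_def if_distrib[of "\<lambda>a. a * _"] cong: if_cong)
  finally show "cl_mul (cl_scalar c) u C = cl_scale c u C" .
qed

lemma cl_mul_scalar_right: "cl_mul u (cl_scalar c) = cl_scale c u"
proof
  fix C
  have "cl_mul u (cl_scalar c) C = (\<Sum>A\<in>UNIV. cl_mul_coeff A {} C * u A * c)"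
    by (simp add: cl_mul_eq_sum_coeff cl_scalar_def if_distrib[of "\<lambda>a. _ * _ * a"] cong: if_cong)
  also have "\<dots> = cl_scale c u C"
    by (simp add: cl_mul_coeff_def cl_sign_def cl_scale_def if_distrib[of "\<lambda>a. a * _"] cong: if_cong)
  finally show "cl_mul u (cl_scalar c) C = cl_scale c u C" .
qed

lemma cl_inverse_scalar:
  assumes "c \<noteq> 0"
  shows "cl_invertible (cl_scalar c :: 'm::{finite,linorder} clv)"
    and "cl_inverse (cl_scalar c :: 'm clv) = cl_scalar (1 / c)"
proof -
  have scale_scalar: "cl_scale a (cl_scalar b) = cl_scalar (a * b)" for a b
    by (auto simp: fun_eq_iff cl_scale_def cl_scalar_def)
  have "cl_scale c v = cl_scalar 1 \<longleftrightarrow> v = cl_scalar (1 / c)" for v :: "'m clv"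
  proof
    assume "cl_scale c v = cl_scalar 1"
    then have "cl_scale (1 / c) (cl_scale c v) = cl_scalar (1 / c)"
      by (simp add: scale_scalar)
    then show "v = cl_scalar (1 / c)"
      using assms by (simp add: cl_scale_scale cl_scale_def)
  qed (use assms in \<open>simp add: scale_scalar\<close>)
  then have scalar_inverse: "cl_mul v (cl_scalar c) = cl_one \<and> cl_mul (cl_scalar c) v = cl_one
      \<longleftrightarrow> v = cl_scalar (1 / c)" for v :: "'m clv"
    by (simp add: cl_mul_scalar_left cl_mul_scalar_right cl_one_def)
  then show "cl_invertible (cl_scalar c :: 'm clv)"
    unfolding cl_invertible_def by blast
  show "cl_inverse (cl_scalar c :: 'm clv) = cl_scalar (1 / c)"
    unfolding cl_inverse_def scalar_inverse by simp
qed

lemma polyfun_sum: "finite S \<Longrightarrow> (\<And>j. j \<in> S \<Longrightarrow> polyfun (p j)) \<Longrightarrow> polyfun (\<lambda>x. \<Sum>j\<in>S. p j x)"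
  by (induction S rule: finite_induct) (auto intro: pf_add pf_const[of 0, simplified])

lemma polyfun_power: "polyfun p \<Longrightarrow> polyfun (\<lambda>x. p x ^ n)"
  by (induction n) (auto intro: pf_mult pf_const[of 1, simplified])

lemma polyfun_norm_power2: "polyfun (\<lambda>x :: (real, 'm::finite) vec. norm x ^ 2)"
proof -
  have "(\<lambda>x :: (real, 'm) vec. norm x ^ 2) = (\<lambda>x. \<Sum>j\<in>UNIV. x $ j * x $ j)"
    by (simp add: power2_norm_eq_inner inner_vec_def)
  moreover have "polyfun (\<lambda>x :: (real, 'm) vec. \<Sum>j\<in>UNIV. x $ j * x $ j)"
    by (intro polyfun_sum pf_mult pf_coord) auto
  ultimately show ?thesis
    by simp
qed

lemma cl_polyfun_scalar: "polyfun p \<Longrightarrow> cl_polyfun (\<lambda>x. cl_scalar (p x) :: 'm::finite clv)"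
  unfolding cl_polyfun_def cl_scalar_def
proof
  fix A :: "'m set"
  show "polyfun p \<Longrightarrow> polyfun (\<lambda>x. if A = {} then p x else 0)"
    by (cases "A = {}") (simp_all add: pf_const)
qed

lemma cl_polyfun_const: "cl_polyfun (\<lambda>x. c)"
  by (simp add: cl_polyfun_def pf_const)

lemma cl_polyfun_cl_vec: "cl_polyfun (cl_vec :: (real, 'm::finite) vec \<Rightarrow> 'm clv)"
  unfolding cl_polyfun_def cl_vec_def
proof (intro allI polyfun_sum finite)
  fix A :: "'m set" and j :: 'm
  show "polyfun (\<lambda>x. if A = {j} then x $ j else 0)"
    by (cases "A = {j}") (simp_all add: pf_const pf_coord)
qed

lemma cartesian_op_cong:
  "cartesian_op P \<Longrightarrow> (\<And>f x. cl_smooth f \<Longrightarrow> x \<noteq> 0 \<Longrightarrow> Q f x = P f x) \<Longrightarrow> cartesian_op Q"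
  unfolding cartesian_op_def by metis

lemma cartesian_op_id: "cartesian_op (\<lambda>f. f)"
  unfolding cartesian_op_def using co_id by metis

lemma cartesian_op_pdc: "cartesian_op (pdc j)"
  unfolding cartesian_op_def using co_pd by metis

lemma cartesian_op_add:
  assumes "cartesian_op P" and "cartesian_op Q"
  shows "cartesian_op (\<lambda>f x. cl_add (P f x) (Q f x))"
proof -
  obtain L1 L2 where "L1 \<in> cart_ops" "L2 \<in> cart_ops"
    and "\<And>f x. cl_smooth f \<Longrightarrow> x \<noteq> 0 \<Longrightarrow> P f x = L1 f x \<and> Q f x = L2 f x"
    using assms unfolding cartesian_op_def by metis
  then show ?thesis
    unfolding cartesian_op_def by (intro bexI[OF _ co_add[of L1 L2]]) auto
qed

lemma cartesian_op_pointwise: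
  assumes M: "(\<lambda>f x. M x (f x)) \<in> cart_ops" and "cartesian_op P"
  shows "cartesian_op (\<lambda>f x. M x (P f x))"
proof -
  obtain L where "L \<in> cart_ops" and "\<And>f x. cl_smooth f \<Longrightarrow> x \<noteq> 0 \<Longrightarrow> P f x = L f x"
    using assms(2) unfolding cartesian_op_def by metis
  moreover from co_comp[OF M \<open>L \<in> cart_ops\<close>] have "(\<lambda>f x. M x (L f x)) \<in> cart_ops"
    by simp
  ultimately show ?thesis
    unfolding cartesian_op_def by (intro bexI[where x = "\<lambda>f x. M x (L f x)"]) auto
qed

lemma cartesian_op_mult: "cl_polyfun a \<Longrightarrow> cartesian_op P \<Longrightarrow> cartesian_op (\<lambda>f x. cl_mul (a x) (P f x))"
  by (rule cartesian_op_pointwise[OF co_mult])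

lemma cartesian_op_scale: "polyfun p \<Longrightarrow> cartesian_op P \<Longrightarrow> cartesian_op (\<lambda>f x. cl_scale (p x) (P f x))"
  using cartesian_op_mult[OF cl_polyfun_scalar] by (simp add: cl_mul_scalar_left)

lemma cartesian_op_scale_quotient:
  assumes p: "polyfun p" and q: "polyfun q" "\<And>x. x \<noteq> 0 \<Longrightarrow> q x \<noteq> 0" and P: "cartesian_op P"
  shows "cartesian_op (\<lambda>f x. cl_scale (p x / q x) (P f x))"
proof -
  have "cartesian_op (\<lambda>f x. cl_mul (cl_inverse (cl_scalar (q x))) (cl_scale (p x) (P f x)))"
    using q cl_inverse_scalar(1) cartesian_op_scale[OF p P]
    by (intro cartesian_op_pointwise[OF co_div] cl_polyfun_scalar) auto
  then show ?thesis
    by (rule cartesian_op_cong) (simp add: q(2) cl_inverse_scalar(2) cl_mul_scalar_left cl_scale_scale)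
qed

lemma cartesian_op_sum:
  "finite S \<Longrightarrow> (\<And>j. j \<in> S \<Longrightarrow> cartesian_op (P j)) \<Longrightarrow> cartesian_op (\<lambda>f x. cl_sum S (\<lambda>j. P j f x))"
proof (induction S rule: finite_induct)
  case empty
  have "cartesian_op (\<lambda>f x. cl_scale 0 (f x))"
    by (intro cartesian_op_scale pf_const cartesian_op_id)
  then show ?case
    by (rule cartesian_op_cong) (simp add: cl_sum_def cl_scale_def)
next
  case (insert k S)
  then have "cartesian_op (\<lambda>f x. cl_add (P k f x) (cl_sum S (\<lambda>j. P j f x)))"
    by (intro cartesian_op_add) auto
  then show ?case
    by (rule cartesian_op_cong) (simp add: insert.hyps cl_sum_def cl_add_def)
qed

definition euler_op :: "'m::finite clf \<Rightarrow> 'm clf" where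
  "euler_op f x = cl_sum UNIV (\<lambda>k. cl_scale (x $ k) (pdc k f x))"

lemma dirac_eq_sum: "dirac f x = cl_sum UNIV (\<lambda>j. cl_mul (cl_basis j) (pdc j f x))"
  by (simp add: dirac_def cl_sum_def)

lemma cartesian_op_dirac: "cartesian_op dirac"
  unfolding dirac_eq_sum[abs_def]
  by (intro cartesian_op_sum cartesian_op_mult cl_polyfun_const cartesian_op_pdc finite)

lemma cartesian_op_euler_op: "cartesian_op euler_op"
  unfolding euler_op_def[abs_def]
  by (intro cartesian_op_sum cartesian_op_scale pf_coord cartesian_op_pdc finite)

lemma coordinate_increment_bound:
  fixes g :: "(real, 'm::finite) vec \<Rightarrow> real"
  assumes S: "convex S" "y \<in> S" "y + t *\<^sub>R axis k 1 \<in> S"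
    and der: "\<And>z. z \<in> S \<Longrightarrow> ((\<lambda>s. g (z + s *\<^sub>R axis k 1)) has_real_derivative D z) (at 0)"
    and bnd: "\<And>z. z \<in> S \<Longrightarrow> \<bar>D z - c\<bar> \<le> \<epsilon>"
  shows "\<bar>g (y + t *\<^sub>R axis k 1) - g y - t * c\<bar> \<le> \<epsilon> * \<bar>t\<bar>"
proof -
  define e :: "(real, 'm) vec" where "e = axis k 1"
  define T where "T = {s. y + s *\<^sub>R e \<in> S}"
  have "convex T"
  proof (rule convexI)
    fix s1 s2 u v :: real
    assume "s1 \<in> T" "s2 \<in> T" "0 \<le> u" "0 \<le> v" "u + v = 1"
    then have "u *\<^sub>R (y + s1 *\<^sub>R e) + v *\<^sub>R (y + s2 *\<^sub>R e) \<in> S"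
      using convexD[OF S(1)] by (simp add: T_def)
    moreover have "u *\<^sub>R (y + s1 *\<^sub>R e) + v *\<^sub>R (y + s2 *\<^sub>R e) = y + (u * s1 + v * s2) *\<^sub>R e"
      using \<open>u + v = 1\<close> by (simp add: algebra_simps flip: scaleR_add_left)
    ultimately show "u *\<^sub>R s1 + v *\<^sub>R s2 \<in> T" by (simp add: T_def)
  qed
  moreover have "((\<lambda>s. g (y + s *\<^sub>R e) - s * c) has_field_derivative D (y + s *\<^sub>R e) - c) (at s within T)"
    if "s \<in> T" for s
  proof -
    have "((\<lambda>u. g (y + s *\<^sub>R e + u *\<^sub>R e)) has_real_derivative D (y + s *\<^sub>R e)) (at 0)"
      using der that by (simp add: T_def e_def)
    then have "((\<lambda>u. g (y + u *\<^sub>R e)) has_real_derivative D (y + s *\<^sub>R e)) (at s)"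
      using DERIV_shift[of "\<lambda>u. g (y + u *\<^sub>R e)" _ 0 s]
      by (simp add: add.commute add.left_commute scaleR_add_left)
    then have "((\<lambda>u. g (y + u *\<^sub>R e) - u * c) has_real_derivative D (y + s *\<^sub>R e) - c) (at s)"
      by (auto intro!: derivative_eq_intros)
    then show ?thesis
      by (rule has_field_derivative_at_within)
  qed
  ultimately have "norm ((g (y + t *\<^sub>R e) - t * c) - (g (y + 0 *\<^sub>R e) - 0 * c)) \<le> \<epsilon> * norm (t - 0)"
    using bnd S by (intro field_differentiable_bound[where f' = "\<lambda>s. D (y + s *\<^sub>R e) - c"])
      (auto simp: T_def e_def)
  then show ?thesis by (simp add: e_def)
qed

lemma increment_bound_by_partials:
  fixes g :: "(real, 'm::finite) vec \<Rightarrow> real"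
  assumes der: "\<And>z k. z \<in> ball x d \<Longrightarrow> ((\<lambda>s. g (z + s *\<^sub>R axis k 1)) has_real_derivative D k z) (at 0)"
    and bnd: "\<And>z k. z \<in> ball x d \<Longrightarrow> \<bar>D k z - D k x\<bar> \<le> \<epsilon>"
    and K: "finite K" "\<And>k. k \<notin> K \<Longrightarrow> h $ k = 0" and h: "norm h < d"
  shows "\<bar>g (x + h) - g x - (\<Sum>k\<in>K. h $ k * D k x)\<bar> \<le> \<epsilon> * (\<Sum>k\<in>K. \<bar>h $ k\<bar>)"
  using K h
proof (induction K arbitrary: h rule: finite_induct)
  case empty
  then have "h = 0" by (simp add: vec_eq_iff)
  then show ?case by simp
next
  case (insert k K)
  define h' where "h' = h - (h $ k) *\<^sub>R axis k 1"
  have h'_nth: "h' $ i = (if i = k then 0 else h $ i)" for i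
    by (simp add: h'_def axis_def)
  have "norm h' \<le> norm h"
    by (rule norm_le_componentwise_cart) (simp add: h'_nth)
  then have h'_in: "x + h' \<in> ball x d" and h_in: "x + h' + h $ k *\<^sub>R axis k 1 \<in> ball x d"
    using insert.prems(2) by (simp_all add: h'_def dist_norm norm_minus_commute)
  have "\<bar>g (x + h') - g x - (\<Sum>i\<in>K. h' $ i * D i x)\<bar> \<le> \<epsilon> * (\<Sum>i\<in>K. \<bar>h' $ i\<bar>)"
    using insert.prems \<open>norm h' \<le> norm h\<close> by (intro insert.IH) (auto simp: h'_nth)
  moreover have "(\<Sum>i\<in>K. h' $ i * D i x) = (\<Sum>i\<in>K. h $ i * D i x)"
    and "(\<Sum>i\<in>K. \<bar>h' $ i\<bar>) = (\<Sum>i\<in>K. \<bar>h $ i\<bar>)"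
    using insert.hyps by (auto simp: h'_nth intro!: sum.cong)
  moreover have "\<bar>g (x + h' + h $ k *\<^sub>R axis k 1) - g (x + h') - h $ k * D k x\<bar> \<le> \<epsilon> * \<bar>h $ k\<bar>"
    using h'_in h_in der bnd by (intro coordinate_increment_bound[where S = "ball x d"]) auto
  moreover have "x + h' + h $ k *\<^sub>R axis k 1 = x + h"
    by (simp add: h'_def)
  ultimately show ?case
    using insert.hyps by (simp add: distrib_left)
qed

lemma has_derivative_of_continuous_partials:
  fixes g :: "(real, 'm::finite) vec \<Rightarrow> real"
  assumes U: "open U" "x \<in> U"
    and der: "\<And>y k. y \<in> U \<Longrightarrow> ((\<lambda>t. g (y + t *\<^sub>R axis k 1)) has_real_derivative D k y) (at 0)"
    and cont: "\<And>k. isCont (D k) x"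
  shows "(g has_derivative (\<lambda>h. \<Sum>k\<in>UNIV. h $ k * D k x)) (at x)"
  unfolding has_derivative_at_alt
proof (intro conjI allI impI)
  show "bounded_linear (\<lambda>h. \<Sum>k\<in>UNIV. h $ k * D k x)"
    by (intro bounded_linear_sum bounded_linear_mult_left[THEN bounded_linear_compose] bounded_linear_vec_nth)
  fix e :: real
  assume "e > 0"
  define \<epsilon> where "\<epsilon> = e / real CARD('m)"
  have "\<epsilon> > 0"
    using \<open>e > 0\<close> by (simp add: \<epsilon>_def)
  have "\<forall>\<^sub>F y in nhds x. dist (D k y) (D k x) < \<epsilon>" for k
    using cont[of k] \<open>\<epsilon> > 0\<close> by (simp add: isCont_def tendsto_at_iff_tendsto_nhds tendstoD)
  then have "\<forall>\<^sub>F y in nhds x. \<forall>k. dist (D k y) (D k x) < \<epsilon>"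
    by (rule eventually_all_finite)
  then have "\<forall>\<^sub>F y in nhds x. (\<forall>k. dist (D k y) (D k x) < \<epsilon>) \<and> y \<in> U"
    using eventually_nhds_in_open[OF U] by (rule eventually_conj)
  then obtain d where "d > 0" and near_x: "\<And>y. y \<in> ball x d \<Longrightarrow> (\<forall>k. dist (D k y) (D k x) < \<epsilon>) \<and> y \<in> U"
    unfolding eventually_nhds_metric by (auto simp: dist_commute)
  show "\<exists>d>0. \<forall>y. norm (y - x) < d \<longrightarrow>
          norm (g y - g x - (\<Sum>k\<in>UNIV. (y - x) $ k * D k x)) \<le> e * norm (y - x)"
  proof (intro exI[of _ d] conjI allI impI)
    fix y
    assume y: "norm (y - x) < d"
    have "\<bar>g (x + (y - x)) - g x - (\<Sum>k\<in>UNIV. (y - x) $ k * D k x)\<bar> \<le> \<epsilon> * (\<Sum>k\<in>UNIV. \<bar>(y - x) $ k\<bar>)"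
      using near_x der y by (intro increment_bound_by_partials[where d = d]) (auto simp: dist_real_def less_imp_le)
    also have "\<dots> \<le> \<epsilon> * (\<Sum>k\<in>(UNIV::'m set). norm (y - x))"
      using \<open>\<epsilon> > 0\<close> by (intro mult_left_mono sum_mono component_le_norm_cart) auto
    also have "\<dots> = e * norm (y - x)"
      by (simp add: \<epsilon>_def)
    finally show "norm (g y - g x - (\<Sum>k\<in>UNIV. (y - x) $ k * D k x)) \<le> e * norm (y - x)"
      by simp
  qed (rule \<open>d > 0\<close>)
qed

definition has_cl_partial :: "'m::finite \<Rightarrow> 'm clf \<Rightarrow> (real, 'm) vec \<Rightarrow> 'm clv \<Rightarrow> bool" where
  "has_cl_partial j F x D \<longleftrightarrow> (\<forall>A. ((\<lambda>t. F (x + t *\<^sub>R axis j 1) A) has_real_derivative D A) (at 0))"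

lemma pdc_eqI: "has_cl_partial j F x D \<Longrightarrow> pdc j F x = D"
  unfolding has_cl_partial_def pdc_def pd_def by (auto simp: fun_eq_iff intro: DERIV_imp_deriv)

lemma smooth_real_has_partial:
  assumes "smooth_real g" "y \<noteq> 0"
  shows "((\<lambda>t. g (y + t *\<^sub>R axis k 1)) has_real_derivative pd k g y) (at 0)"
proof -
  have "(\<lambda>t. iter_pd [] g (y + t *\<^sub>R axis k 1)) differentiable (at 0)"
    using assms unfolding smooth_real_def by blast
  then show ?thesis
    unfolding pd_def by (simp add: DERIV_deriv_iff_real_differentiable)
qed

lemma smooth_real_isCont_partial:
  assumes "smooth_real g" "y \<noteq> 0"
  shows "isCont (pd k g) y"
proof -
  have "continuous_on (- {0}) (iter_pd [k] g)"
    using assms(1) unfolding smooth_real_def by blast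
  then show ?thesis
    using assms(2) by (simp add: continuous_on_eq_continuous_at open_Compl)
qed

lemma has_cl_partial_smooth: "cl_smooth f \<Longrightarrow> x \<noteq> 0 \<Longrightarrow> has_cl_partial j f x (pdc j f x)"
  unfolding has_cl_partial_def pdc_def cl_smooth_def using smooth_real_has_partial by blast

lemma cl_vec_line: "cl_vec (x + t *\<^sub>R axis j 1) A = cl_vec x A + t * cl_basis j A"
  by (cases "\<exists>a. A = {a}") (auto simp: cl_vec_def cl_basis_def axis_def split: if_splits)

lemma has_cl_partial_cl_vec: "has_cl_partial j cl_vec x (cl_basis j)"
  unfolding has_cl_partial_def cl_vec_line by (auto intro!: derivative_eq_intros)

lemma has_cl_partial_neg: "has_cl_partial j F x D \<Longrightarrow> has_cl_partial j (\<lambda>y. cl_neg (F y)) x (cl_neg D)"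
  unfolding has_cl_partial_def cl_neg_def cl_scale_def using DERIV_cmult by blast

lemma has_cl_partial_scale:
  assumes \<phi>: "((\<lambda>t. \<phi> (x + t *\<^sub>R axis j 1)) has_real_derivative \<phi>') (at 0)" and F: "has_cl_partial j F x D"
  shows "has_cl_partial j (\<lambda>y. cl_scale (\<phi> y) (F y)) x (cl_add (cl_scale \<phi>' (F x)) (cl_scale (\<phi> x) D))"
  unfolding has_cl_partial_def cl_add_def cl_scale_def
  using DERIV_mult[OF \<phi> F[unfolded has_cl_partial_def, rule_format]] by (simp add: mult.commute)

lemma has_cl_partial_mult:
  assumes F: "has_cl_partial j F x DF" and G: "has_cl_partial j G x DG"
  shows "has_cl_partial j (\<lambda>y. cl_mul (F y) (G y)) x (cl_add (cl_mul DF (G x)) (cl_mul (F x) DG))"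
  unfolding has_cl_partial_def
proof
  fix C
  have "((\<lambda>t. \<Sum>A\<in>UNIV. \<Sum>B\<in>UNIV. cl_mul_coeff A B C * F (x + t *\<^sub>R axis j 1) A * G (x + t *\<^sub>R axis j 1) B)
     has_real_derivative (\<Sum>A\<in>UNIV. \<Sum>B\<in>UNIV. cl_mul_coeff A B C * (DF A * G x B + F x A * DG B))) (at 0)"
    using F G unfolding has_cl_partial_def
    by (intro DERIV_sum) (auto intro!: derivative_eq_intros simp: algebra_simps)
  then show "((\<lambda>t. cl_mul (F (x + t *\<^sub>R axis j 1)) (G (x + t *\<^sub>R axis j 1)) C) has_real_derivative
      cl_add (cl_mul DF (G x)) (cl_mul (F x) DG) C) (at 0)"
    unfolding cl_mul_eq_sum_coeff cl_add_def by (simp add: algebra_simps sum.distrib)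
qed

lemma has_real_derivative_inverse_norm:
  fixes x :: "(real, 'm::finite) vec"
  assumes "x \<noteq> 0"
  shows "((\<lambda>t. 1 / norm (x + t *\<^sub>R axis j 1)) has_real_derivative - (x $ j) / norm x ^ 3) (at 0)"
proof -
  have "((\<lambda>t. x + t *\<^sub>R axis j 1) has_derivative (\<lambda>t. t *\<^sub>R axis j 1)) (at 0)"
    by (auto intro!: derivative_eq_intros)
  moreover have "(norm has_derivative (\<lambda>h. h \<bullet> sgn x)) (at (x + 0 *\<^sub>R axis j 1))"
    using has_derivative_norm[OF assms] by simp
  ultimately have "((\<lambda>t. norm (x + t *\<^sub>R axis j 1)) has_derivative (\<lambda>t. (t *\<^sub>R axis j 1) \<bullet> sgn x)) (at 0)"
    by (rule has_derivative_compose[where g = norm, unfolded o_def])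
  then have "((\<lambda>t. norm (x + t *\<^sub>R axis j 1)) has_real_derivative x $ j / norm x) (at 0)"
    by (rule has_derivative_imp_has_field_derivative) (simp add: sgn_div_norm inner_axis' field_simps)
  then show ?thesis
    using assms by (auto intro!: derivative_eq_intros simp: power3_eq_cube power2_eq_square)
qed

lemma omega_eq: "omega x = cl_scale (1 / norm x) (cl_vec x)"
  by (simp add: omega_def cl_vec_def cl_scale_def fun_eq_iff sum_distrib_left if_distrib divide_inverse
      mult.commute cong: if_cong)

lemma has_cl_partial_omega:
  fixes x :: "(real, 'm::finite) vec"
  assumes "x \<noteq> 0"
  shows "has_cl_partial j omega x
    (cl_add (cl_scale (- (x $ j) / norm x ^ 3) (cl_vec x)) (cl_scale (1 / norm x) (cl_basis j)))"
  unfolding omega_eq[abs_def]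
  by (rule has_cl_partial_scale[OF has_real_derivative_inverse_norm[OF assms] has_cl_partial_cl_vec])

lemma radial_deriv_eq_euler_op:
  fixes f :: "'m::finite clf"
  assumes f: "cl_smooth f" and x: "x \<noteq> 0"
  shows "radial_deriv f x = cl_scale (1 / norm x) (euler_op f x)"
proof
  fix A
  define g where "g y = f y A" for y
  define u where "u = x /\<^sub>R norm x"
  have "smooth_real g"
    using f unfolding cl_smooth_def g_def by simp
  then have "(g has_derivative (\<lambda>h. \<Sum>k\<in>UNIV. h $ k * pd k g x)) (at (norm x *\<^sub>R u))"
    using x by (auto simp: u_def intro: has_derivative_of_continuous_partials[of "- {0}"]
        smooth_real_has_partial smooth_real_isCont_partial)
  then have "((\<lambda>t. g (t *\<^sub>R u)) has_derivative (\<lambda>t. \<Sum>k\<in>UNIV. (t *\<^sub>R u) $ k * pd k g x)) (at (norm x))"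
    by (rule has_derivative_compose[where f = "\<lambda>t. t *\<^sub>R u", unfolded o_def, rotated])
      (auto intro!: derivative_eq_intros)
  then have "((\<lambda>t. g (t *\<^sub>R u)) has_real_derivative (\<Sum>k\<in>UNIV. u $ k * pd k g x)) (at (norm x))"
    by (rule has_derivative_imp_has_field_derivative) (simp add: sum_distrib_left algebra_simps)
  then have "radial_deriv f x A = (\<Sum>k\<in>UNIV. u $ k * pd k g x)"
    unfolding radial_deriv_def g_def u_def by (rule DERIV_imp_deriv)
  then show "radial_deriv f x A = cl_scale (1 / norm x) (euler_op f x) A"
    by (simp add: euler_op_def cl_sum_def cl_scale_def pdc_def g_def[abs_def] u_def sum_distrib_left
        divide_inverse mult_ac)
qed

definition signum_dirac_cartesian :: "'m::{finite,linorder} clf \<Rightarrow> 'm clf" where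
  "signum_dirac_cartesian f x = cl_sum UNIV (\<lambda>j. cl_add (cl_add
     (cl_scale (- 1 / norm x ^ 2) (cl_mul (cl_vec x) (cl_mul (cl_basis j) (cl_mul (cl_basis j) (f x)))))
     (cl_scale (x $ j / (norm x ^ 2) ^ 2) (cl_mul (cl_vec x) (cl_mul (cl_basis j) (cl_mul (cl_vec x) (f x))))))
     (cl_scale (- 1 / norm x ^ 2) (cl_mul (cl_vec x) (cl_mul (cl_basis j) (cl_mul (cl_vec x) (pdc j f x))))))"

definition second_op_cartesian :: "'m::{finite,linorder} clf \<Rightarrow> 'm clf" where
  "second_op_cartesian f x = cl_add (cl_scale (- 1) (dirac f x)) (cl_add
     (cl_scale (1 / norm x ^ 2) (cl_mul (cl_vec x) (euler_op f x)))
     (cl_scale ((real CARD('m) - 1) / norm x ^ 2) (cl_mul (cl_vec x) (f x))))"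

lemma cartesian_op_signum_dirac_cartesian: "cartesian_op signum_dirac_cartesian"
  unfolding signum_dirac_cartesian_def[abs_def]
  by (intro cartesian_op_sum cartesian_op_add cartesian_op_scale_quotient cartesian_op_mult
      cartesian_op_id cartesian_op_pdc cl_polyfun_const cl_polyfun_cl_vec pf_const pf_coord
      polyfun_norm_power2 polyfun_power finite) auto

lemma cartesian_op_second_op_cartesian: "cartesian_op second_op_cartesian"
  unfolding second_op_cartesian_def[abs_def]
  by (intro cartesian_op_add cartesian_op_scale_quotient cartesian_op_scale cartesian_op_mult
      cartesian_op_dirac cartesian_op_euler_op cartesian_op_id cl_polyfun_cl_vec pf_const
      polyfun_norm_power2) auto

lemma signum_dirac_eq_cartesian:
  fixes f :: "'m::{finite,linorder} clf"
  assumes f: "cl_smooth f" and x: "x \<noteq> 0"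
  shows "signum_dirac f x = signum_dirac_cartesian f x"
proof -
  have "pdc j (\<lambda>y. cl_neg (cl_mul (omega y) (f y))) x = cl_neg (cl_add
      (cl_mul (cl_add (cl_scale (- (x $ j) / norm x ^ 3) (cl_vec x)) (cl_scale (1 / norm x) (cl_basis j))) (f x))
      (cl_mul (omega x) (pdc j f x)))" for j
    by (intro pdc_eqI has_cl_partial_neg has_cl_partial_mult has_cl_partial_omega has_cl_partial_smooth f x)
  then have "signum_dirac f x = cl_sum UNIV (\<lambda>j. cl_mul (omega x) (cl_mul (cl_basis j) (cl_neg (cl_add
      (cl_mul (cl_add (cl_scale (- (x $ j) / norm x ^ 3) (cl_vec x)) (cl_scale (1 / norm x) (cl_basis j))) (f x))
      (cl_mul (omega x) (pdc j f x))))))"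
    by (simp add: signum_dirac_def dirac_eq_sum cl_mul_sum_right)
  also have "\<dots> = signum_dirac_cartesian f x"
    unfolding signum_dirac_cartesian_def omega_eq cl_neg_def
    by (intro arg_cong[where f = "cl_sum UNIV"] ext, simp only: cl_bilinear_simps)
      (use x in \<open>simp add: cl_add_def cl_scale_def field_simps power3_eq_cube power2_eq_square\<close>)
  finally show ?thesis .
qed

lemma second_op_eq_cartesian:
  fixes f :: "'m::{finite,linorder} clf"
  assumes f: "cl_smooth f" and x: "x \<noteq> 0"
  shows "second_op f x = second_op_cartesian f x"
  unfolding second_op_def second_op_cartesian_def angular_dirac_def radial_deriv_eq_euler_op[OF f x]
    omega_eq cl_sub_def cl_neg_def
  using x by (simp only: cl_bilinear_simps) (simp add: fun_eq_iff cl_add_def cl_scale_def field_simps power2_eq_square)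

theorem proposition3:
  assumes "CARD('m::{finite,linorder}) \<ge> 2"
  shows "cartesian_op (signum_dirac :: 'm clf \<Rightarrow> 'm clf) \<and>
         cartesian_op (second_op :: 'm clf \<Rightarrow> 'm clf)"
proof
  show "cartesian_op (signum_dirac :: 'm clf \<Rightarrow> 'm clf)"
    using cartesian_op_signum_dirac_cartesian by (rule cartesian_op_cong) (rule signum_dirac_eq_cartesian)
  show "cartesian_op (second_op :: 'm clf \<Rightarrow> 'm clf)"
    using cartesian_op_second_op_cartesian by (rule cartesian_op_cong) (rule second_op_eq_cartesian)
qed

end
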